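(* Let $n\in\mathbb{N}$ be such that \[W_n=\{\langle m,\ulcorner\phi\urcorner\rangle : \phi\text{ is an }\mathscr{L}\text{-formula with }FV(\phi)\subseteq\{x\}\text{ and }\Sigma(n)\models\phi(x|\overline{m})\}.\] Then $\mathcal{M}_{\Sigma(n)}\models\Sigma(n)$.
   Context: $\mathscr{L}$ is the language of Peano arithmetic (variables, constant $0$, unary $S$, binary $+$, $\cdot$) extended by a unary modal operator $K$: whenever $\phi$ is a formula, $K\phi$ is a formula (called purely modal). An $\mathscr{L}$-structure consists of a first-order structure for the arithmetic part together with a truth value for each purely modal formula $K\phi$ and each assignment $s$ of the variables, subject to: (a) independence from $s(x)$ for $x$ not free in $\phi$; (b) invariance under alphabetic variants of $\phi$; (c) $\mathcal{M}\models K\phi(x|y)[s]$ iff $\mathcal{M}\models K\phi[s(x|s(y))]$ when $y$ is substitutable for $x$ in $\phi$. Satisfaction is extended inductively to all formulas; $\mathcal{M}\models\Sigma$ means $\mathcal{M}$ satisfies every member of $\Sigma$ under every assignment. $\Sigma\models\phi$ means every $\mathscr{L}$-structure satisfying $\Sigma$ satisfies $\phi$ under all assignments; $\phi$ is valid if $\emptyset\models\phi$. $W_e$ denotes the $e$-th recursively enumerable set; $\ulcorner\phi\urcorner$ is the canonical Gödel number of $\phi$; $\overline{k}$ is the numeral for $k$; $\langle\cdot,\cdot\rangle$ is a canonical computable bijection $\mathbb{N}^2\to\mathbb{N}$; inside $\mathscr{L}$, $\langle t_1,t_2\rangle\in W_{t_3}$ abbreviates a fixed Peano-arithmetic formula defining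 this relation. For a formula $\phi$ and an assignment $s$ into $\mathbb{N}$, $\phi^s$ is obtained by replacing each free variable $x$ of $\phi$ by $\overline{s(x)}$. For a set $\Sigma$ of sentences, $\mathcal{M}_\Sigma$ is the $\mathscr{L}$-structure with universe $\mathbb{N}$, arithmetic symbols interpreted as usual, and $\mathcal{M}_\Sigma\models K\phi[s]$ iff $\Sigma\models\phi^s$. Schemata: $E1$: universal closure of $K\phi$ for $\phi$ valid; $E2$: universal closure of $K(\phi\rightarrow\psi)\rightarrow K\phi\rightarrow K\psi$; $E4$: universal closure of $K\phi\rightarrow KK\phi$. Axioms of Peano arithmetic for $\mathscr{L}$: the usual axioms for successor, addition and multiplication together with induction for all $\mathscr{L}$-formulas. Assigned validity: the sentences $\phi^s$ for $\phi$ valid and $s$ any assignment into $\mathbb{N}$. For $n\in\mathbb{N}$, $\Sigma(n)$ is the set of sentences consisting of: (1) all instances of $E1$, $E2$, $E4$; (2) the axioms of Peano arithmetic for $\mathscr{L}$; (3) $\forall x(K\phi\leftrightarrow\langle x,\overline{\ulcorner\phi\urcorner}\rangle\in W_{\overline{n}})$ for every $\mathscr{L}$-formula $\phi$ with $FV(\phi)\subseteq\{x\}$; (4) all instances of assigned validity; (5) $K\phi$ whenever $\phi$ is in (1)–(4) or (recursively) in (5). *)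

theory Defs
  imports Main "HOL-Library.Nat_Bijection"
begin

section \<open>Syntax of the language L (PA plus a unary modal operator K)\<close>

datatype tm = Var nat | Zero | Sc tm | Pl tm tm | Ml tm tm

datatype fm = Eq tm tm | Neg fm | Imp fm fm | All nat fm | K fm

definition And :: "fm \<Rightarrow> fm \<Rightarrow> fm" where "And a b = Neg (Imp a (Neg b))"
definition Iff :: "fm \<Rightarrow> fm \<Rightarrow> fm" where "Iff a b = And (Imp a b) (Imp b a)"
definition Exq :: "nat \<Rightarrow> fm \<Rightarrow> fm" where "Exq x a = Neg (All x (Neg a))"

fun FVt :: "tm \<Rightarrow> nat set" where
  "FVt (Var x) = {x}"
| "FVt Zero = {}"
| "FVt (Sc t) = FVt t"
| "FVt (Pl t u) = FVt t \<union> FVt u"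
| "FVt (Ml t u) = FVt t \<union> FVt u"

fun FV :: "fm \<Rightarrow> nat set" where
  "FV (Eq t u) = FVt t \<union> FVt u"
| "FV (Neg a) = FV a"
| "FV (Imp a b) = FV a \<union> FV b"
| "FV (All x a) = FV a - {x}"
| "FV (K a) = FV a"

fun vars :: "fm \<Rightarrow> nat set" where
  "vars (Eq t u) = FVt t \<union> FVt u"
| "vars (Neg a) = vars a"
| "vars (Imp a b) = vars a \<union> vars b"
| "vars (All x a) = insert x (vars a)"
| "vars (K a) = vars a"

text \<open>Simultaneous (naive) substitution of terms for the free variables.\<close>
fun substt :: "(nat \<Rightarrow> tm) \<Rightarrow> tm \<Rightarrow> tm" where
  "substt \<sigma> (Var x) = \<sigma> x"
| "substt \<sigma> Zero = Zero"
| "substt \<sigma> (Sc t) = Sc (substt \<sigma> t)"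
| "substt \<sigma> (Pl t u) = Pl (substt \<sigma> t) (substt \<sigma> u)"
| "substt \<sigma> (Ml t u) = Ml (substt \<sigma> t) (substt \<sigma> u)"

fun substs :: "(nat \<Rightarrow> tm) \<Rightarrow> fm \<Rightarrow> fm" where
  "substs \<sigma> (Eq t u) = Eq (substt \<sigma> t) (substt \<sigma> u)"
| "substs \<sigma> (Neg a) = Neg (substs \<sigma> a)"
| "substs \<sigma> (Imp a b) = Imp (substs \<sigma> a) (substs \<sigma> b)"
| "substs \<sigma> (All x a) = All x (substs (\<sigma>(x := Var x)) a)"
| "substs \<sigma> (K a) = K (substs \<sigma> a)"

text \<open>\<open>subst x t \<phi>\<close> is \<open>\<phi>(x|t)\<close>: replace the free occurrences of x by t.\<close>
definition subst :: "nat \<Rightarrow> tm \<Rightarrow> fm \<Rightarrow> fm" where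
  "subst x t a = substs (Var(x := t)) a"

text \<open>t is substitutable for x in \<phi> (Enderton).\<close>
fun substitutable :: "tm \<Rightarrow> nat \<Rightarrow> fm \<Rightarrow> bool" where
  "substitutable t x (Eq u v) = True"
| "substitutable t x (Neg a) = substitutable t x a"
| "substitutable t x (Imp a b) = (substitutable t x a \<and> substitutable t x b)"
| "substitutable t x (All y a) =
     (x \<notin> FV (All y a) \<or> (y \<notin> FVt t \<and> substitutable t x a))"
| "substitutable t x (K a) = substitutable t x a"

fun idx :: "nat list \<Rightarrow> nat \<Rightarrow> nat option" where
  "idx [] x = None"
| "idx (y # ys) x = (if x = y then Some 0 else map_option Suc (idx ys x))"

definition alpha_var :: "nat list \<Rightarrow> nat list \<Rightarrow> nat \<Rightarrow> nat \<Rightarrow> bool" where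
  "alpha_var e1 e2 x y = (idx e1 x = idx e2 y \<and> (idx e1 x = None \<longrightarrow> x = y))"

fun alpha_tm :: "nat list \<Rightarrow> nat list \<Rightarrow> tm \<Rightarrow> tm \<Rightarrow> bool" where
  "alpha_tm e1 e2 (Var x) (Var y) = alpha_var e1 e2 x y"
| "alpha_tm e1 e2 Zero Zero = True"
| "alpha_tm e1 e2 (Sc t) (Sc u) = alpha_tm e1 e2 t u"
| "alpha_tm e1 e2 (Pl t t') (Pl u u') = (alpha_tm e1 e2 t u \<and> alpha_tm e1 e2 t' u')"
| "alpha_tm e1 e2 (Ml t t') (Ml u u') = (alpha_tm e1 e2 t u \<and> alpha_tm e1 e2 t' u')"
| "alpha_tm e1 e2 _ _ = False"

fun alpha_fm :: "nat list \<Rightarrow> nat list \<Rightarrow> fm \<Rightarrow> fm \<Rightarrow> bool" where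
  "alpha_fm e1 e2 (Eq t t') (Eq u u') = (alpha_tm e1 e2 t u \<and> alpha_tm e1 e2 t' u')"
| "alpha_fm e1 e2 (Neg a) (Neg b) = alpha_fm e1 e2 a b"
| "alpha_fm e1 e2 (Imp a a') (Imp b b') = (alpha_fm e1 e2 a b \<and> alpha_fm e1 e2 a' b')"
| "alpha_fm e1 e2 (All x a) (All y b) = alpha_fm (x # e1) (y # e2) a b"
| "alpha_fm e1 e2 (K a) (K b) = alpha_fm e1 e2 a b"
| "alpha_fm e1 e2 _ _ = False"

definition alphabetic_variant :: "fm \<Rightarrow> fm \<Rightarrow> bool" where
  "alphabetic_variant a b = alpha_fm [] [] a b"

definition uclose :: "fm \<Rightarrow> fm" where
  "uclose a = foldr All (sorted_list_of_set (FV a)) a"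

fun num :: "nat \<Rightarrow> tm" where
  "num 0 = Zero"
| "num (Suc k) = Sc (num k)"

text \<open>\<open>\<phi>^s\<close>: replace each free variable x by the numeral of s(x).\<close>
definition assigned :: "fm \<Rightarrow> (nat \<Rightarrow> nat) \<Rightarrow> fm" where
  "assigned a s = substs (\<lambda>x. num (s x)) a"

text \<open>Pairing: Cantor pairing \<open>prod_encode\<close> (a canonical computable bijection).\<close>

fun gnt :: "tm \<Rightarrow> nat" where
  "gnt (Var x) = prod_encode (0, x)"
| "gnt Zero = prod_encode (1, 0)"
| "gnt (Sc t) = prod_encode (2, gnt t)"
| "gnt (Pl t u) = prod_encode (3, prod_encode (gnt t, gnt u))"
| "gnt (Ml t u) = prod_encode (4, prod_encode (gnt t, gnt u))"

fun gn :: "fm \<Rightarrow> nat" where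
  "gn (Eq t u) = prod_encode (0, prod_encode (gnt t, gnt u))"
| "gn (Neg a) = prod_encode (1, gn a)"
| "gn (Imp a b) = prod_encode (2, prod_encode (gn a, gn b))"
| "gn (All x a) = prod_encode (3, prod_encode (x, gn a))"
| "gn (K a) = prod_encode (4, gn a)"

datatype recf = Zf | Sf | Proj nat | Comp recf "recf list" | Prim recf recf | Mu recf

inductive evalr :: "recf \<Rightarrow> nat list \<Rightarrow> nat \<Rightarrow> bool" where
  "evalr Zf xs 0"
| "evalr Sf (x # xs) (Suc x)"
| "i < length xs \<Longrightarrow> evalr (Proj i) xs (xs ! i)"
| "list_all2 (\<lambda>g y. evalr g xs y) gs ys \<Longrightarrow> evalr f ys z \<Longrightarrow> evalr (Comp f gs) xs z"
| "evalr f xs y \<Longrightarrow> evalr (Prim f g) (0 # xs) y"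
| "evalr (Prim f g) (n # xs) r \<Longrightarrow> evalr g (n # r # xs) y \<Longrightarrow> evalr (Prim f g) (Suc n # xs) y"
| "evalr f (y # xs) 0 \<Longrightarrow> (\<forall>z<y. \<exists>v. v \<noteq> 0 \<and> evalr f (z # xs) v) \<Longrightarrow> evalr (Mu f) xs y"

fun code :: "recf \<Rightarrow> nat" where
  "code Zf = prod_encode (0, 0)"
| "code Sf = prod_encode (1, 0)"
| "code (Proj i) = prod_encode (2, i)"
| "code (Comp f gs) = prod_encode (3, prod_encode (code f, list_encode (map code gs)))"
| "code (Prim f g) = prod_encode (4, prod_encode (code f, code g))"
| "code (Mu f) = prod_encode (5, code f)"

text \<open>W e: domain of the e-th unary partial recursive function (empty if e codes none).\<close>
definition W :: "nat \<Rightarrow> nat set" where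
  "W e = {m. \<exists>f. code f = e \<and> (\<exists>y. evalr f [m] y)}"

text \<open>An L-structure: universe (a nonempty subset of nat; by Loewenheim--Skolem,
countable universes suffice for the consequence relation of this countable language),
interpretations of 0, S, +, *, and a truth value for each K\<phi> and assignment.\<close>

record str =
  univ :: "nat set"
  zer :: nat
  suc :: "nat \<Rightarrow> nat"
  pls :: "nat \<Rightarrow> nat \<Rightarrow> nat"
  tms :: "nat \<Rightarrow> nat \<Rightarrow> nat"
  kint :: "fm \<Rightarrow> (nat \<Rightarrow> nat) \<Rightarrow> bool"

definition is_assign :: "str \<Rightarrow> (nat \<Rightarrow> nat) \<Rightarrow> bool" where
  "is_assign M s = (\<forall>x. s x \<in> univ M)"

fun evt :: "str \<Rightarrow> (nat \<Rightarrow> nat) \<Rightarrow> tm \<Rightarrow> nat" where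
  "evt M s (Var x) = s x"
| "evt M s Zero = zer M"
| "evt M s (Sc t) = suc M (evt M s t)"
| "evt M s (Pl t u) = pls M (evt M s t) (evt M s u)"
| "evt M s (Ml t u) = tms M (evt M s t) (evt M s u)"

fun sat :: "str \<Rightarrow> fm \<Rightarrow> (nat \<Rightarrow> nat) \<Rightarrow> bool" where
  "sat M (Eq t u) s = (evt M s t = evt M s u)"
| "sat M (Neg a) s = (\<not> sat M a s)"
| "sat M (Imp a b) s = (sat M a s \<longrightarrow> sat M b s)"
| "sat M (All x a) s = (\<forall>d\<in>univ M. sat M a (s(x := d)))"
| "sat M (K a) s = kint M a s"

definition is_structure :: "str \<Rightarrow> bool" where
  "is_structure M \<longleftrightarrow>
     univ M \<noteq> {} \<and> zer M \<in> univ M \<and>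
     (\<forall>a\<in>univ M. suc M a \<in> univ M) \<and>
     (\<forall>a\<in>univ M. \<forall>b\<in>univ M. pls M a b \<in> univ M \<and> tms M a b \<in> univ M) \<and>
     \<comment> \<open>(a)\<close>
     (\<forall>a s s'. is_assign M s \<longrightarrow> is_assign M s' \<longrightarrow> (\<forall>x\<in>FV a. s x = s' x)
        \<longrightarrow> kint M a s = kint M a s') \<and>
     \<comment> \<open>(b)\<close>
     (\<forall>a b s. is_assign M s \<longrightarrow> alphabetic_variant a b \<longrightarrow> kint M a s = kint M b s) \<and>
     \<comment> \<open>(c)\<close>
     (\<forall>a x y s. is_assign M s \<longrightarrow> substitutable (Var y) x a \<longrightarrow>
        kint M (subst x (Var y) a) s = kint M a (s(x := s y)))"

definition models :: "str \<Rightarrow> fm set \<Rightarrow> bool" where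
  "models M \<Sigma> \<longleftrightarrow> (\<forall>a\<in>\<Sigma>. \<forall>s. is_assign M s \<longrightarrow> sat M a s)"

definition entails :: "fm set \<Rightarrow> fm \<Rightarrow> bool" where
  "entails \<Sigma> a \<longleftrightarrow> (\<forall>M. is_structure M \<longrightarrow> models M \<Sigma> \<longrightarrow>
      (\<forall>s. is_assign M s \<longrightarrow> sat M a s))"

definition valid :: "fm \<Rightarrow> bool" where
  "valid a \<longleftrightarrow> entails {} a"

definition M_of :: "fm set \<Rightarrow> str" where
  "M_of \<Sigma> = \<lparr> univ = UNIV, zer = 0, suc = Suc, pls = (+), tms = (*),
              kint = (\<lambda>a s. entails \<Sigma> (assigned a s)) \<rparr>"

text \<open>Standard model of arithmetic (K interpreted arbitrarily; used only for K-free formulas).\<close>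
definition Nstd :: str where
  "Nstd = \<lparr> univ = UNIV, zer = 0, suc = Suc, pls = (+), tms = (*), kint = (\<lambda>a s. False) \<rparr>"

inductive delta0 :: "fm \<Rightarrow> bool" where
  "delta0 (Eq t u)"
| "delta0 a \<Longrightarrow> delta0 (Neg a)"
| "delta0 a \<Longrightarrow> delta0 b \<Longrightarrow> delta0 (Imp a b)"
| "delta0 a \<Longrightarrow> y \<notin> FVt t \<Longrightarrow> z \<noteq> y \<Longrightarrow> z \<notin> FVt t \<Longrightarrow>
     delta0 (All y (Imp (Exq z (Eq (Pl (Var y) (Sc (Var z))) t)) a))"
   \<comment> \<open>bounded quantifier \<open>\<forall>y < t\<close>, with \<open>y < t\<close> expressed as \<open>\<exists>z (y + Sz = t)\<close>\<close>

inductive sigma1 :: "fm \<Rightarrow> bool" where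
  "delta0 a \<Longrightarrow> sigma1 a"
| "sigma1 a \<Longrightarrow> sigma1 (Exq y a)"

definition defines_W :: "fm \<Rightarrow> bool" where
  "defines_W WF \<longleftrightarrow> sigma1 WF \<and> FV WF \<subseteq> {0, 1, 2} \<and>
     (\<forall>s. sat Nstd WF s \<longleftrightarrow> prod_encode (s 0, s 1) \<in> W (s 2))"

text \<open>The abbreviation \<open>\<langle>t1,t2\<rangle> \<in> W_t3\<close>: \<open>\<exists>a b c (a = t1 \<and> b = t2 \<and> c = t3 \<and> WF(a,b,c))\<close>
with a,b,c fresh (so no capture occurs).\<close>
definition memW :: "fm \<Rightarrow> tm \<Rightarrow> tm \<Rightarrow> tm \<Rightarrow> fm" where
  "memW WF t1 t2 t3 =
    (let N = Suc (Max ({0} \<union> vars WF \<union> FVt t1 \<union> FVt t2 \<union> FVt t3));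
         a = N; b = N + 1; c = N + 2
     in Exq a (Exq b (Exq c (And (Eq (Var a) t1) (And (Eq (Var b) t2) (And (Eq (Var c) t3)
          (substs (Var(0 := Var a, 1 := Var b, 2 := Var c)) WF)))))))"

abbreviation xv :: nat where "xv \<equiv> 0"

definition E1 :: "fm set" where "E1 = {uclose (K a) | a. valid a}"
definition E2 :: "fm set" where
  "E2 = {uclose (Imp (K (Imp a b)) (Imp (K a) (K b))) | a b. True}"
definition E4 :: "fm set" where "E4 = {uclose (Imp (K a) (K (K a))) | a. True}"

definition PA :: "fm set" where
  "PA = {All 0 (Neg (Eq (Sc (Var 0)) Zero)),
         All 0 (All 1 (Imp (Eq (Sc (Var 0)) (Sc (Var 1))) (Eq (Var 0) (Var 1)))),
         All 0 (Eq (Pl (Var 0) Zero) (Var 0)),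
         All 0 (All 1 (Eq (Pl (Var 0) (Sc (Var 1))) (Sc (Pl (Var 0) (Var 1))))),
         All 0 (Eq (Ml (Var 0) Zero) Zero),
         All 0 (All 1 (Eq (Ml (Var 0) (Sc (Var 1))) (Pl (Ml (Var 0) (Var 1)) (Var 0))))}
   \<union> {uclose (Imp (subst x Zero a) (Imp (All x (Imp a (subst x (Sc (Var x)) a))) (All x a)))
       | a x. True}"

definition Ax3 :: "fm \<Rightarrow> nat \<Rightarrow> fm set" where
  "Ax3 WF n = {All xv (Iff (K a) (memW WF (Var xv) (num (gn a)) (num n))) | a. FV a \<subseteq> {xv}}"

definition AV :: "fm set" where
  "AV = {assigned a s | a s. valid a}"

definition SigmaT :: "fm \<Rightarrow> nat \<Rightarrow> fm set" where
  "SigmaT WF n = {(K ^^ j) a | a j. a \<in> E1 \<union> E2 \<union> E4 \<union> PA \<union> Ax3 WF n \<union> AV}"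

end

theory Submission
  imports Defs
begin

text \<open>Arithmetic holds because
  the universe is the standard model; E1, E2 and assigned validity hold because \<open>\<Sigma>\<close> contains all
  assigned validities and entailment is closed under modus ponens; the \<open>K\<close>-prefixed axioms hold
  because the axioms are sentences lying in \<open>\<Sigma>\<close>; axiom (3) is the hypothesis on \<open>W n\<close>, read through
  the Sigma_1 definition of \<open>W\<close>. For E4 one needs that \<open>\<Sigma> \<Turnstile> \<phi>\<close> implies \<open>\<Sigma> \<Turnstile> K\<phi>\<close> for sentences:
  by the hypothesis, \<open>\<langle>0, \<ulcorner>\<phi>\<urcorner>\<rangle> \<in> W n\<close> is a true Sigma_1 fact, hence holds in every model of PA, where
  axiom (3) turns it into \<open>K\<phi>\<close>. Finally \<open>M_of \<Sigma>\<close> is an L-structure: (a) and (c) are properties of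
  substituting numerals, and (b) holds since alphabetic variants are satisfied by the same
  structures, which for a subformula \<open>K\<psi>\<close> follows from (a)-(c) of the structure at hand by renaming
  the bound variables in scope to fresh ones.\<close>

section \<open>Substitution\<close>

lemma finite_FVt [simp]: "finite (FVt t)"
  by (induction t) auto

lemma finite_FV [simp]: "finite (FV a)"
  by (induction a) auto

lemma finite_vars [simp]: "finite (vars a)"
  by (induction a) auto

lemma FVt_num [simp]: "FVt (num k) = {}"
  by (induction k) auto

lemma FV_subset_vars: "FV a \<subseteq> vars a"
  by (induction a) auto

lemma FV_funpow_K [simp]: "FV ((K ^^ j) a) = FV a"
  by (induction j) auto

lemma FV_uclose [simp]: "FV (uclose a) = {}"
proof -
  have "FV (foldr All xs a) = FV a - set xs" for xs
    by (induction xs) auto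
  then show ?thesis
    by (simp add: uclose_def)
qed

lemma FV_Iff [simp]: "FV (Iff a b) = FV a \<union> FV b"
  by (auto simp: Iff_def And_def)

lemma substt_cong: "(\<And>y. y \<in> FVt t \<Longrightarrow> \<sigma> y = \<tau> y) \<Longrightarrow> substt \<sigma> t = substt \<tau> t"
  by (induction t) auto

lemma substs_cong: "(\<And>y. y \<in> FV a \<Longrightarrow> \<sigma> y = \<tau> y) \<Longrightarrow> substs \<sigma> a = substs \<tau> a"
proof (induction a arbitrary: \<sigma> \<tau>)
  case (Eq t u)
  then show ?case
    by (auto intro: substt_cong)
next
  case (All x a)
  have "substs (\<sigma>(x := Var x)) a = substs (\<tau>(x := Var x)) a"
    by (rule All.IH) (use All.prems in auto)
  then show ?case
    by simp
next
  case (Imp a b)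
  have "substs \<sigma> a = substs \<tau> a" "substs \<sigma> b = substs \<tau> b"
    by (rule Imp.IH; use Imp.prems in simp)+
  then show ?case
    by simp
qed (metis FV.simps substs.simps)+

lemma substt_upd_fresh [simp]: "x \<notin> FVt t \<Longrightarrow> substt (\<sigma>(x := u)) t = substt \<sigma> t"
  by (rule substt_cong) auto

lemma substt_Var [simp]: "substt Var t = t"
  by (induction t) auto

lemma substs_Var [simp]: "substs Var a = a"
  by (induction a) (auto simp: fun_upd_idem)

lemma FV_substs: "FV (substs \<sigma> a) \<subseteq> (\<Union>y\<in>FV a. FVt (\<sigma> y))"
proof (induction a arbitrary: \<sigma>)
  case (Eq t u)
  have "FVt (substt \<sigma> t) \<subseteq> (\<Union>y\<in>FVt t. FVt (\<sigma> y))" for t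
    by (induction t) auto
  then show ?case
    by fastforce
next
  case (All x a)
  show ?case
  proof
    fix z
    assume "z \<in> FV (substs \<sigma> (All x a))"
    then have z: "z \<in> FV (substs (\<sigma>(x := Var x)) a)" "z \<noteq> x"
      by auto
    with All[of "\<sigma>(x := Var x)"] obtain y where "y \<in> FV a" "z \<in> FVt ((\<sigma>(x := Var x)) y)"
      by blast
    with z show "z \<in> (\<Union>y\<in>FV (All x a). FVt (\<sigma> y))"
      by (cases "y = x") auto
  qed
qed fastforce+

lemma subst_sentence: "FV a = {} \<Longrightarrow> subst x t a = a"
  unfolding subst_def using substs_cong[of a "Var(x := t)" Var] by simp

lemma FV_assigned [simp]: "FV (assigned a s) = {}"
  using FV_substs[of "\<lambda>x. num (s x)" a] by (auto simp: assigned_def)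

lemma assigned_sentence: "FV a = {} \<Longrightarrow> assigned a s = a"
  unfolding assigned_def using substs_cong[of a "\<lambda>x. num (s x)" Var] by simp

lemma assigned_cong: "(\<And>x. x \<in> FV a \<Longrightarrow> s x = s' x) \<Longrightarrow> assigned a s = assigned a s'"
  unfolding assigned_def by (rule substs_cong) auto

lemma assigned_Imp [simp]: "assigned (Imp a b) s = Imp (assigned a s) (assigned b s)"
  by (simp add: assigned_def)

lemma assigned_K [simp]: "assigned (K a) s = K (assigned a s)"
  by (simp add: assigned_def)

lemma assigned_upd_eq_subst: "FV a \<subseteq> {x} \<Longrightarrow> assigned a (s(x := d)) = subst x (num d) a"
  unfolding assigned_def subst_def by (rule substs_cong) auto

text \<open>This is stronger than capture-freeness, but it makes every substitution lemma below
  go through without a separate congruence argument under binders.\<close>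
definition capture_free :: "(nat \<Rightarrow> tm) \<Rightarrow> fm \<Rightarrow> bool" where
  "capture_free \<sigma> a \<longleftrightarrow> (\<forall>y. FVt (\<sigma> y) \<inter> vars a \<subseteq> {y})"

lemma capture_free_closed: "(\<And>y. FVt (\<sigma> y) = {}) \<Longrightarrow> capture_free \<sigma> a"
  by (simp add: capture_free_def)

lemma capture_free_simps [simp]:
  "capture_free \<sigma> (Neg a) \<longleftrightarrow> capture_free \<sigma> a"
  "capture_free \<sigma> (Imp a b) \<longleftrightarrow> capture_free \<sigma> a \<and> capture_free \<sigma> b"
  "capture_free \<sigma> (K a) \<longleftrightarrow> capture_free \<sigma> a"
  by (auto simp: capture_free_def)

lemma capture_free_All:
  assumes "capture_free \<sigma> (All x a)"
  shows "capture_free (\<sigma>(x := Var x)) a"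
    and "y \<noteq> x \<Longrightarrow> x \<notin> FVt (\<sigma> y)"
  using assms by (auto simp: capture_free_def)

lemma substs_substs:
  "capture_free \<sigma> a \<Longrightarrow> substs \<tau> (substs \<sigma> a) = substs (\<lambda>y. substt \<tau> (\<sigma> y)) a"
proof (induction a arbitrary: \<sigma> \<tau>)
  case (Eq t u)
  have "substt \<tau> (substt \<sigma> t) = substt (\<lambda>y. substt \<tau> (\<sigma> y)) t" for t
    by (induction t) auto
  then show ?case
    by simp
next
  case (All x a)
  have "substs (\<tau>(x := Var x)) (substs (\<sigma>(x := Var x)) a)
      = substs (\<lambda>y. substt (\<tau>(x := Var x)) ((\<sigma>(x := Var x)) y)) a"
    by (rule All.IH[OF capture_free_All(1)[OF All.prems]])
  also have "(\<lambda>y. substt (\<tau>(x := Var x)) ((\<sigma>(x := Var x)) y)) = (\<lambda>y. substt \<tau> (\<sigma> y))(x := Var x)"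
    using capture_free_All(2)[OF All.prems] by (auto simp: fun_eq_iff)
  finally show ?case
    by (simp only: substs.simps)
qed simp_all

fun bnd :: "fm \<Rightarrow> nat set" where
  "bnd (Eq t u) = {}"
| "bnd (Neg a) = bnd a"
| "bnd (Imp a b) = bnd a \<union> bnd b"
| "bnd (All x a) = insert x (bnd a)"
| "bnd (K a) = bnd a"

lemma bnd_substs [simp]: "bnd (substs \<sigma> a) = bnd a"
  by (induction a arbitrary: \<sigma>) auto

lemma bnd_subset_vars: "bnd a \<subseteq> vars a"
  by (induction a) auto

lemma substitutable_unbound: "w \<notin> bnd a \<Longrightarrow> substitutable (Var w) u a"
  by (induction a) auto

lemma substs_subst_Var:
  "substitutable (Var y) x a \<Longrightarrow> substs \<tau> (subst x (Var y) a) = substs (\<tau>(x := \<tau> y)) a"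
proof (induction a arbitrary: \<tau>)
  case (Eq t u)
  have "substt \<tau> (substt (Var(x := Var y)) t) = substt (\<tau>(x := \<tau> y)) t" for t
    by (induction t) auto
  then show ?case
    by (simp only: subst_def substs.simps)
next
  case (All z a)
  show ?case
  proof (cases "x \<in> FV (All z a)")
    case False
    have "substs (Var(x := Var y)) (All z a) = substs Var (All z a)"
      and "substs (\<tau>(x := \<tau> y)) (All z a) = substs \<tau> (All z a)"
      by (rule substs_cong; use False in auto)+
    then show ?thesis
      by (simp only: subst_def substs_Var)
  next
    case True
    with All.prems have "z \<noteq> y" "z \<noteq> x" and sa: "substitutable (Var y) x a"
      by auto
    then have upd1: "(Var(x := Var y))(z := Var z) = Var(x := Var y)"
      and upd2: "(\<tau>(z := Var z))(x := (\<tau>(z := Var z)) y) = (\<tau>(x := \<tau> y))(z := Var z)"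
      by (auto simp: fun_eq_iff)
    have "substs \<tau> (subst x (Var y) (All z a)) = All z (substs (\<tau>(z := Var z)) (subst x (Var y) a))"
      by (simp only: subst_def substs.simps upd1)
    also have "\<dots> = All z (substs ((\<tau>(z := Var z))(x := (\<tau>(z := Var z)) y)) a)"
      by (simp only: All.IH[OF sa])
    also have "\<dots> = substs (\<tau>(x := \<tau> y)) (All z a)"
      by (simp only: upd2 substs.simps)
    finally show ?thesis .
  qed
qed (simp_all add: subst_def)

lemma assigned_subst_Var:
  assumes "substitutable (Var y) x a"
  shows "assigned (subst x (Var y) a) s = assigned a (s(x := s y))"
proof -
  have "(\<lambda>z. num (s z))(x := num (s y)) = (\<lambda>z. num ((s(x := s y)) z))"
    by auto
  then show ?thesis
    by (simp only: assigned_def substs_subst_Var[OF assms])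
qed

lemma gn_inj: "gn a = gn b \<Longrightarrow> a = b"
proof -
  have gnt_inj: "gnt t = gnt u \<Longrightarrow> t = u" for t u
    by (induction t arbitrary: u; case_tac u; simp)
  show "gn a = gn b \<Longrightarrow> a = b"
    by (induction a arbitrary: b; case_tac b; auto dest: gnt_inj)
qed

section \<open>Satisfaction and substitution\<close>

lemma evt_cong: "(\<And>x. x \<in> FVt t \<Longrightarrow> s x = s' x) \<Longrightarrow> evt M s t = evt M s' t"
  by (induction t) auto

lemma evt_upd_fresh [simp]: "x \<notin> FVt t \<Longrightarrow> evt M (s(x := d)) t = evt M s t"
  by (rule evt_cong) auto

lemma evt_substt: "evt M s (substt \<sigma> t) = evt M (\<lambda>y. evt M s (\<sigma> y)) t"
  by (induction t) auto

lemma evt_kint_update [simp]: "evt (M\<lparr>kint := k\<rparr>) s t = evt M s t"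
  by (induction t) auto

lemma sat_Exq [simp]: "sat M (Exq x a) s \<longleftrightarrow> (\<exists>d\<in>univ M. sat M a (s(x := d)))"
  by (simp add: Exq_def)

lemma sat_And [simp]: "sat M (And a b) s \<longleftrightarrow> sat M a s \<and> sat M b s"
  by (simp add: And_def)

lemma sat_Iff [simp]: "sat M (Iff a b) s \<longleftrightarrow> (sat M a s \<longleftrightarrow> sat M b s)"
  by (auto simp: Iff_def)

lemma is_assign_upd: "is_assign M s \<Longrightarrow> d \<in> univ M \<Longrightarrow> is_assign M (s(x := d))"
  by (simp add: is_assign_def)

lemma sat_uclose:
  assumes "\<And>s. is_assign M s \<Longrightarrow> sat M a s"
  shows "is_assign M s \<Longrightarrow> sat M (uclose a) s"
proof -
  have "is_assign M s \<Longrightarrow> sat M (foldr All xs a) s" for xs s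
    by (induction xs arbitrary: s) (auto simp: assms is_assign_upd)
  then show "is_assign M s \<Longrightarrow> sat M (uclose a) s"
    by (simp add: uclose_def)
qed

fun kfree :: "fm \<Rightarrow> bool" where
  "kfree (Eq t u) = True"
| "kfree (Neg a) = kfree a"
| "kfree (Imp a b) = (kfree a \<and> kfree b)"
| "kfree (All x a) = kfree a"
| "kfree (K a) = False"

lemma kfree_substs [simp]: "kfree (substs \<sigma> a) = kfree a"
  by (induction a arbitrary: \<sigma>) auto

lemma delta0_kfree: "delta0 a \<Longrightarrow> kfree a"
  by (induction rule: delta0.induct) (auto simp: Exq_def)

lemma sigma1_kfree: "sigma1 a \<Longrightarrow> kfree a"
  by (induction rule: sigma1.induct) (auto simp: Exq_def delta0_kfree)

lemma sat_kint_update: "kfree a \<Longrightarrow> sat (M\<lparr>kint := k\<rparr>) a s = sat M a s"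
  by (induction a arbitrary: s) auto

lemma sat_cong_kfree:
  "kfree a \<Longrightarrow> (\<And>x. x \<in> FV a \<Longrightarrow> s x = s' x) \<Longrightarrow> sat M a s = sat M a s'"
proof (induction a arbitrary: s s')
  case (Eq t u)
  have "evt M s t = evt M s' t" "evt M s u = evt M s' u"
    by (rule evt_cong; use Eq.prems in simp)+
  then show ?case
    by simp
next
  case (Neg a)
  have "sat M a s = sat M a s'"
    by (rule Neg.IH; use Neg.prems in simp)
  then show ?case
    by simp
next
  case (Imp a b)
  have "sat M a s = sat M a s'" "sat M b s = sat M b s'"
    by (rule Imp.IH; use Imp.prems in simp)+
  then show ?case
    by simp
next
  case (All x a)
  have "sat M a (s(x := d)) = sat M a (s'(x := d))" for d
    by (rule All.IH) (use All.prems in auto)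
  then show ?case
    by simp
qed simp

lemma sat_substs:
  assumes kint_substs: "\<And>b \<tau> s. capture_free \<tau> b \<Longrightarrow> (\<And>y. P (\<tau> y)) \<Longrightarrow>
      kint M (substs \<tau> b) s = kint M b (\<lambda>y. evt M s (\<tau> y))"
    and P_Var: "\<And>x. P (Var x)"
  shows "capture_free \<sigma> a \<Longrightarrow> (\<And>y. P (\<sigma> y)) \<Longrightarrow>
    sat M (substs \<sigma> a) s = sat M a (\<lambda>y. evt M s (\<sigma> y))"
proof (induction a arbitrary: \<sigma> s)
  case (All x a)
  have "sat M (substs (\<sigma>(x := Var x)) a) (s(x := d)) = sat M a ((\<lambda>y. evt M s (\<sigma> y))(x := d))" for d
  proof -
    have "sat M (substs (\<sigma>(x := Var x)) a) (s(x := d))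
        = sat M a (\<lambda>y. evt M (s(x := d)) ((\<sigma>(x := Var x)) y))"
      by (rule All.IH[OF capture_free_All(1)[OF All.prems(1)]]) (simp add: All.prems(2) P_Var)
    also have "(\<lambda>y. evt M (s(x := d)) ((\<sigma>(x := Var x)) y)) = (\<lambda>y. evt M s (\<sigma> y))(x := d)"
      using capture_free_All(2)[OF All.prems(1)] by (auto simp: fun_eq_iff)
    finally show ?thesis .
  qed
  then show ?case
    by simp
qed (simp_all add: evt_substt kint_substs)

lemma sat_substs_kfree:
  assumes "kfree a" and "capture_free \<sigma> a"
  shows "sat M (substs \<sigma> a) s = sat M a (\<lambda>y. evt M s (\<sigma> y))"
proof -
  let ?M = "M\<lparr>kint := \<lambda>_ _. False\<rparr>"
  have "sat ?M (substs \<sigma> a) s = sat ?M a (\<lambda>y. evt ?M s (\<sigma> y))"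
    by (rule sat_substs[where P = "\<lambda>_. True"]) (simp_all add: assms)
  then show ?thesis
    using assms(1) by (simp add: sat_kint_update)
qed

lemma M_of_simps [simp]:
  "univ (M_of S) = UNIV" "zer (M_of S) = 0" "suc (M_of S) = Suc" "pls (M_of S) = (+)"
  "tms (M_of S) = (*)" "kint (M_of S) = (\<lambda>a s. entails S (assigned a s))"
  by (simp_all add: M_of_def)

lemma Nstd_simps [simp]:
  "univ Nstd = UNIV" "zer Nstd = 0" "suc Nstd = Suc" "pls Nstd = (+)" "tms Nstd = (*)"
  by (simp_all add: Nstd_def)

lemma is_assign_M_of [simp]: "is_assign (M_of S) s"
  by (simp add: is_assign_def)

lemma evt_M_of_num [simp]: "evt (M_of S) s (num k) = k"
  by (induction k) auto

lemma sat_M_of_kfree: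
  assumes "kfree a"
  shows "sat (M_of S) a s = sat Nstd a s"
proof -
  have "Nstd = (M_of S)\<lparr>kint := \<lambda>_ _. False\<rparr>"
    by (simp add: Nstd_def M_of_def)
  then show ?thesis
    using sat_kint_update[OF assms] by metis
qed

text \<open>Terms built from variables, \<open>0\<close> and successor: in \<open>M_of S\<close> they commute with replacing
  variables by numerals, which is what \<open>assigned\<close> does under \<open>K\<close>.\<close>
fun succ_tm :: "tm \<Rightarrow> bool" where
  "succ_tm (Var x) = True"
| "succ_tm Zero = True"
| "succ_tm (Sc t) = succ_tm t"
| "succ_tm (Pl t u) = False"
| "succ_tm (Ml t u) = False"

lemma succ_tm_num [simp]: "succ_tm (num k)"
  by (induction k) auto

lemma substt_num_succ_tm: "succ_tm t \<Longrightarrow> substt (\<lambda>x. num (s x)) t = num (evt (M_of S) s t)"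
  by (induction t) auto

lemma sat_M_of_substs:
  assumes "capture_free \<sigma> a" and "\<And>y. succ_tm (\<sigma> y)"
  shows "sat (M_of S) (substs \<sigma> a) s = sat (M_of S) a (\<lambda>y. evt (M_of S) s (\<sigma> y))"
proof (rule sat_substs[where P = succ_tm, OF _ _ assms])
  fix b \<tau> s
  assume "capture_free \<tau> b" and "\<And>y. succ_tm (\<tau> y)"
  then have "assigned (substs \<tau> b) s = assigned b (\<lambda>y. evt (M_of S) s (\<tau> y))"
    by (simp add: assigned_def substs_substs substt_num_succ_tm[where S = S])
  then show "kint (M_of S) (substs \<tau> b) s = kint (M_of S) b (\<lambda>y. evt (M_of S) s (\<tau> y))"
    by simp
qed simp

section \<open>Alphabetic variants and condition (b)\<close>

lemma alpha_var_Nil [simp]: "alpha_var [] [] u v \<longleftrightarrow> u = v"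
  by (simp add: alpha_var_def)

lemma alpha_var_Cons:
  "alpha_var (x # e1) (y # e2) u v \<longleftrightarrow> (u = x \<and> v = y) \<or> (u \<noteq> x \<and> v \<noteq> y \<and> alpha_var e1 e2 u v)"
  unfolding alpha_var_def by (cases "idx e1 u"; cases "idx e2 v") auto

lemma idx_eq_None_iff: "idx e u = None \<longleftrightarrow> u \<notin> set e"
  by (induction e) auto

lemma idx_eq_SomeD: "idx e u = Some i \<Longrightarrow> i < length e \<and> e ! i = u"
  by (induction e arbitrary: i) (auto split: if_splits)

lemma alpha_tm_closed: "FVt t = {} \<Longrightarrow> alpha_tm e1 e2 t t"
  by (induction t) auto

lemma alpha_tm_substt:
  "alpha_tm e1 e2 t u \<Longrightarrow> (\<And>x y. alpha_var e1 e2 x y \<Longrightarrow> alpha_tm c1 c2 (\<sigma>1 x) (\<sigma>2 y))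
   \<Longrightarrow> alpha_tm c1 c2 (substt \<sigma>1 t) (substt \<sigma>2 u)"
  by (induction t arbitrary: u; case_tac u; simp)

lemma alpha_tm_Cons:
  "alpha_tm e1 e2 t u \<Longrightarrow> x \<notin> FVt t \<Longrightarrow> y \<notin> FVt u \<Longrightarrow> alpha_tm (x # e1) (y # e2) t u"
  by (induction t arbitrary: u; case_tac u; auto simp: alpha_var_Cons)

lemma alpha_fm_substs:
  "alpha_fm e1 e2 \<phi> \<psi> \<Longrightarrow> (\<And>x y. alpha_var e1 e2 x y \<Longrightarrow> alpha_tm c1 c2 (\<sigma>1 x) (\<sigma>2 y))
   \<Longrightarrow> capture_free \<sigma>1 \<phi> \<Longrightarrow> capture_free \<sigma>2 \<psi>
   \<Longrightarrow> alpha_fm c1 c2 (substs \<sigma>1 \<phi>) (substs \<sigma>2 \<psi>)"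
proof (induction \<phi> arbitrary: \<psi> e1 e2 c1 c2 \<sigma>1 \<sigma>2)
  case (Eq t t')
  then show ?case
    by (cases \<psi>) (auto intro: alpha_tm_substt)
next
  case (Neg a)
  then show ?case
    by (cases \<psi>) auto
next
  case (Imp a b)
  then obtain a' b' where \<psi>: "\<psi> = Imp a' b'"
    by (cases \<psi>) auto
  have "alpha_fm c1 c2 (substs \<sigma>1 a) (substs \<sigma>2 a')"
    by (rule Imp.IH(1)) (use Imp.prems \<psi> in auto)
  moreover have "alpha_fm c1 c2 (substs \<sigma>1 b) (substs \<sigma>2 b')"
    by (rule Imp.IH(2)) (use Imp.prems \<psi> in auto)
  ultimately show ?case
    using \<psi> by simp
next
  case (K a)
  then show ?case
    by (cases \<psi>) auto
next
  case (All x a)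
  then obtain y b where \<psi>: "\<psi> = All y b"
    by (cases \<psi>) auto
  have al: "alpha_fm (x # e1) (y # e2) a b"
    using All.prems(1) \<psi> by simp
  have "alpha_tm (x # c1) (y # c2) ((\<sigma>1(x := Var x)) u) ((\<sigma>2(y := Var y)) v)"
    if "alpha_var (x # e1) (y # e2) u v" for u v
    using that All.prems(2) capture_free_All(2)[OF All.prems(3)]
      capture_free_All(2)[OF All.prems(4)[unfolded \<psi>]]
    by (auto simp: alpha_var_Cons intro: alpha_tm_Cons)
  from All.IH[OF al this capture_free_All(1)[OF All.prems(3)]
      capture_free_All(1)[OF All.prems(4)[unfolded \<psi>]]]
  show ?case
    using \<psi> by (simp add: fun_upd_def)
qed

lemma alpha_tm_FV:
  "alpha_tm e1 e2 t t' \<Longrightarrow> u \<in> FVt t' \<Longrightarrow> \<exists>x\<in>FVt t. alpha_var e1 e2 x u"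
  by (induction t arbitrary: t'; case_tac t'; auto)

lemma alpha_fm_FV:
  "alpha_fm e1 e2 \<phi> \<psi> \<Longrightarrow> u \<in> FV \<psi> \<Longrightarrow> \<exists>x\<in>FV \<phi>. alpha_var e1 e2 x u"
proof (induction \<phi> arbitrary: \<psi> e1 e2)
  case (Eq t t')
  then show ?case
    by (cases \<psi>) (auto dest: alpha_tm_FV)
next
  case (Imp a b)
  then obtain a' b' where "\<psi> = Imp a' b'"
    by (cases \<psi>) auto
  with Imp show ?case
    by (metis FV.simps(3) UnCI UnE alpha_fm.simps(3))
next
  case (All x a)
  then obtain y b where \<psi>: "\<psi> = All y b"
    by (cases \<psi>) auto
  with All.prems have "alpha_fm (x # e1) (y # e2) a b" "u \<in> FV b" "u \<noteq> y"
    by auto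
  with All.IH obtain x' where "x' \<in> FV a" "alpha_var (x # e1) (y # e2) x' u"
    by blast
  with \<open>u \<noteq> y\<close> show ?case
    unfolding alpha_var_Cons by auto
next
  case (Neg a)
  then show ?case
    by (cases \<psi>) auto
next
  case (K a)
  then show ?case
    by (cases \<psi>) auto
qed

lemma evt_alpha:
  "alpha_tm e1 e2 t u \<Longrightarrow> (\<And>x y. alpha_var e1 e2 x y \<Longrightarrow> t1 x = t2 y) \<Longrightarrow> evt M t1 t = evt M t2 u"
  by (induction t arbitrary: u; case_tac u; auto)

lemma structure_kint_cong:
  assumes "is_structure M" "is_assign M s" "is_assign M s'" "\<And>x. x \<in> FV a \<Longrightarrow> s x = s' x"
  shows "kint M a s = kint M a s'"
proof -
  from assms(1) have "\<forall>a s s'. is_assign M s \<longrightarrow> is_assign M s' \<longrightarrow> (\<forall>x\<in>FV a. s x = s' x)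
      \<longrightarrow> kint M a s = kint M a s'"
    unfolding is_structure_def by (elim conjE) assumption
  with assms(2-) show ?thesis
    by blast
qed

lemma structure_kint_alpha:
  assumes "is_structure M" "is_assign M s" "alphabetic_variant a b"
  shows "kint M a s = kint M b s"
proof -
  from assms(1) have "\<forall>a b s. is_assign M s \<longrightarrow> alphabetic_variant a b \<longrightarrow> kint M a s = kint M b s"
    unfolding is_structure_def by (elim conjE) assumption
  with assms(2-) show ?thesis
    by blast
qed

lemma structure_kint_subst_Var:
  assumes "is_structure M" "is_assign M s" "substitutable (Var y) x a"
  shows "kint M (subst x (Var y) a) s = kint M a (s(x := s y))"
proof -
  from assms(1) have "\<forall>a x y s. is_assign M s \<longrightarrow> substitutable (Var y) x a \<longrightarrow>
      kint M (subst x (Var y) a) s = kint M a (s(x := s y))"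
    unfolding is_structure_def by (elim conjE) assumption
  with assms(2-) show ?thesis
    by blast
qed

text \<open>Iterating condition (c) one variable at a time.\<close>
lemma structure_kint_rename:
  assumes "is_structure M" and "finite D"
  shows "is_assign M t \<Longrightarrow> (\<And>u. u \<in> D \<Longrightarrow> \<rho> u \<notin> vars \<phi> \<union> D) \<Longrightarrow> (\<And>u. u \<notin> D \<Longrightarrow> \<rho> u = u) \<Longrightarrow>
    kint M (substs (\<lambda>u. Var (\<rho> u)) \<phi>) t = kint M \<phi> (\<lambda>u. t (\<rho> u))"
  using assms(2)
proof (induction D arbitrary: \<rho> t rule: finite_induct)
  case empty
  then show ?case
    by simp
next
  case (insert u D)
  define \<rho>' where "\<rho>' = \<rho>(u := u)"
  have \<rho>'_ne_u: "v \<noteq> u \<Longrightarrow> \<rho>' v \<noteq> u" for v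
    using insert.prems(2,3) by (cases "v \<in> D") (auto simp: \<rho>'_def)
  have "capture_free (\<lambda>v. Var (\<rho>' v)) \<phi>"
    unfolding capture_free_def using insert.prems(2,3) insert.hyps(2)
    by (auto simp: \<rho>'_def)
  moreover have "(\<lambda>v. Var (\<rho> v)) = (\<lambda>v. substt (Var(u := Var (\<rho> u))) (Var (\<rho>' v)))"
    using \<rho>'_ne_u by (auto simp: fun_eq_iff \<rho>'_def)
  ultimately have eq: "substs (\<lambda>v. Var (\<rho> v)) \<phi> = subst u (Var (\<rho> u)) (substs (\<lambda>v. Var (\<rho>' v)) \<phi>)"
    by (simp add: subst_def substs_substs)
  have "substitutable (Var (\<rho> u)) u (substs (\<lambda>v. Var (\<rho>' v)) \<phi>)"
    using insert.prems(2)[of u] bnd_subset_vars[of \<phi>] by (intro substitutable_unbound) auto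
  then have "kint M (substs (\<lambda>v. Var (\<rho> v)) \<phi>) t
      = kint M (substs (\<lambda>v. Var (\<rho>' v)) \<phi>) (t(u := t (\<rho> u)))"
    unfolding eq by (rule structure_kint_subst_Var[OF assms(1) insert.prems(1)])
  also have "\<dots> = kint M \<phi> (\<lambda>v. (t(u := t (\<rho> u))) (\<rho>' v))"
    using insert.prems insert.hyps(2)
    by (intro insert.IH) (auto simp: \<rho>'_def is_assign_def)
  also have "(\<lambda>v. (t(u := t (\<rho> u))) (\<rho>' v)) = (\<lambda>v. t (\<rho> v))"
    using \<rho>'_ne_u by (auto simp: fun_eq_iff \<rho>'_def)
  finally show ?case .
qed

text \<open>To compare \<open>K\<phi>\<close> and \<open>K\<psi>\<close> under contexts \<open>e1, e2\<close> of bound variables, the \<open>i\<close>-th entry of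
  each context is renamed to the fresh variable \<open>N + i\<close>; the renamed formulas are then
  alphabetic variants in the empty context, and condition (b) applies.\<close>
definition ctx_var :: "nat \<Rightarrow> nat list \<Rightarrow> nat \<Rightarrow> nat" where
  "ctx_var N e u = (case idx e u of None \<Rightarrow> u | Some i \<Rightarrow> N + i)"

definition ctx_assign :: "nat \<Rightarrow> nat list \<Rightarrow> (nat \<Rightarrow> nat) \<Rightarrow> nat \<Rightarrow> nat" where
  "ctx_assign N e t w = (if N \<le> w then t (e ! (w - N)) else t w)"

lemma is_assign_ctx_assign: "is_assign M t \<Longrightarrow> is_assign M (ctx_assign N e t)"
  by (simp add: is_assign_def ctx_assign_def)

lemma ctx_var_alpha_var: "alpha_var e1 e2 x y \<Longrightarrow> ctx_var N e1 x = ctx_var N e2 y"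
  by (auto simp: alpha_var_def ctx_var_def split: option.split)

lemma ctx_assign_ctx_var: "u < N \<Longrightarrow> ctx_assign N e t (ctx_var N e u) = t u"
  by (auto simp: ctx_assign_def ctx_var_def dest: idx_eq_SomeD split: option.split)

lemma ctx_var_bound: "u \<in> set e \<Longrightarrow> N \<le> ctx_var N e u"
  using idx_eq_None_iff[of e u] by (auto simp: ctx_var_def split: option.split)

lemma ctx_var_notin: "u \<notin> set e \<Longrightarrow> ctx_var N e u = u"
  by (simp add: ctx_var_def idx_eq_None_iff[symmetric])

lemma ctx_var_below: "ctx_var N e u < N \<Longrightarrow> ctx_var N e u = u"
  using ctx_var_bound[of u e N] ctx_var_notin[of u e N] by (cases "u \<in> set e") auto

lemma capture_free_ctx_var:
  assumes "\<And>z. z \<in> vars \<phi> \<Longrightarrow> z < N"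
  shows "capture_free (\<lambda>u. Var (ctx_var N e u)) \<phi>"
  unfolding capture_free_def
proof (intro allI subsetI)
  fix y z
  assume "z \<in> FVt (Var (ctx_var N e y)) \<inter> vars \<phi>"
  then have "z = ctx_var N e y" "z < N"
    using assms by auto
  then show "z \<in> {y}"
    using ctx_var_below by simp
qed

lemma kint_ctx_rename:
  assumes "is_structure M" and "is_assign M t" and "\<And>z. z \<in> vars \<phi> \<union> set e \<Longrightarrow> z < N"
  shows "kint M (substs (\<lambda>u. Var (ctx_var N e u)) \<phi>) (ctx_assign N e t) = kint M \<phi> t"
proof -
  have "kint M (substs (\<lambda>u. Var (ctx_var N e u)) \<phi>) (ctx_assign N e t)
      = kint M \<phi> (\<lambda>u. ctx_assign N e t (ctx_var N e u))"
  proof (rule structure_kint_rename[OF assms(1) finite_set is_assign_ctx_assign[OF assms(2)]])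
    fix u
    show "u \<in> set e \<Longrightarrow> ctx_var N e u \<notin> vars \<phi> \<union> set e"
      using assms(3)[of "ctx_var N e u"] ctx_var_bound[of u e N] by auto
    show "u \<notin> set e \<Longrightarrow> ctx_var N e u = u"
      by (rule ctx_var_notin)
  qed
  also have "\<dots> = kint M \<phi> t"
  proof (rule structure_kint_cong[OF assms(1) _ assms(2)])
    show "is_assign M (\<lambda>u. ctx_assign N e t (ctx_var N e u))"
      using is_assign_ctx_assign[OF assms(2)] by (simp add: is_assign_def)
    show "ctx_assign N e t (ctx_var N e x) = t x" if "x \<in> FV \<phi>" for x
      using that FV_subset_vars assms(3) by (blast intro: ctx_assign_ctx_var)
  qed
  finally show ?thesis .
qed

lemma kint_alpha_fm:
  assumes str: "is_structure M" and al: "alpha_fm e1 e2 \<phi> \<psi>"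
    and t: "is_assign M t1" "is_assign M t2" and t_alpha: "\<And>x y. alpha_var e1 e2 x y \<Longrightarrow> t1 x = t2 y"
  shows "kint M \<phi> t1 = kint M \<psi> t2"
proof -
  define V where "V = vars \<phi> \<union> vars \<psi> \<union> set e1 \<union> set e2"
  define N where "N = Suc (Max V)"
  have below: "z < N" if "z \<in> V" for z
    using Max_ge[of V z] that by (simp add: N_def V_def less_Suc_eq_le)
  define \<phi>' where "\<phi>' = substs (\<lambda>u. Var (ctx_var N e1 u)) \<phi>"
  define \<psi>' where "\<psi>' = substs (\<lambda>u. Var (ctx_var N e2 u)) \<psi>"
  have "alpha_fm [] [] \<phi>' \<psi>'"
    unfolding \<phi>'_def \<psi>'_def
  proof (rule alpha_fm_substs[OF al])
    show "alpha_tm [] [] (Var (ctx_var N e1 x)) (Var (ctx_var N e2 y))" if "alpha_var e1 e2 x y" for x y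
      using ctx_var_alpha_var[OF that] by simp
    show "capture_free (\<lambda>u. Var (ctx_var N e1 u)) \<phi>" "capture_free (\<lambda>u. Var (ctx_var N e2 u)) \<psi>"
      using below by (auto simp: V_def intro!: capture_free_ctx_var)
  qed
  have agree: "ctx_assign N e1 t1 v = ctx_assign N e2 t2 v" if "v \<in> FV \<psi>'" for v
  proof -
    obtain u where u: "u \<in> FV \<psi>" and v: "v = ctx_var N e2 u"
      using \<open>v \<in> FV \<psi>'\<close> FV_substs[of "\<lambda>u. Var (ctx_var N e2 u)" \<psi>] unfolding \<psi>'_def by auto
    obtain x where x: "x \<in> FV \<phi>" and xu: "alpha_var e1 e2 x u"
      using alpha_fm_FV[OF al u] by blast
    have "x < N" "u < N"
      using x u FV_subset_vars below unfolding V_def by blast+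
    then show ?thesis
      using v ctx_var_alpha_var[OF xu] t_alpha[OF xu] ctx_assign_ctx_var[of x N e1 t1]
        ctx_assign_ctx_var[of u N e2 t2] by simp
  qed
  have "kint M \<phi> t1 = kint M \<phi>' (ctx_assign N e1 t1)"
    unfolding \<phi>'_def using below by (intro kint_ctx_rename[symmetric] str t) (auto simp: V_def)
  also have "\<dots> = kint M \<psi>' (ctx_assign N e1 t1)"
    using \<open>alpha_fm [] [] \<phi>' \<psi>'\<close> by (intro structure_kint_alpha str is_assign_ctx_assign t)
      (simp add: alphabetic_variant_def)
  also have "\<dots> = kint M \<psi>' (ctx_assign N e2 t2)"
    using agree by (intro structure_kint_cong str is_assign_ctx_assign t)
  also have "\<dots> = kint M \<psi> t2"
    unfolding \<psi>'_def using below by (intro kint_ctx_rename str t) (auto simp: V_def)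
  finally show ?thesis .
qed

lemma sat_alpha_fm:
  assumes "is_structure M"
  shows "alpha_fm e1 e2 \<phi> \<psi> \<Longrightarrow> is_assign M t1 \<Longrightarrow> is_assign M t2 \<Longrightarrow>
    (\<And>x y. alpha_var e1 e2 x y \<Longrightarrow> t1 x = t2 y) \<Longrightarrow> sat M \<phi> t1 = sat M \<psi> t2"
proof (induction \<phi> arbitrary: \<psi> e1 e2 t1 t2)
  case (Eq t t')
  then obtain u u' where \<psi>: "\<psi> = Eq u u'" and "alpha_tm e1 e2 t u" "alpha_tm e1 e2 t' u'"
    by (cases \<psi>) auto
  then have "evt M t1 t = evt M t2 u" "evt M t1 t' = evt M t2 u'"
    using Eq.prems(4) by (blast intro: evt_alpha)+
  then show ?case
    using \<psi> by simp
next
  case (Neg a)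
  then show ?case
    by (cases \<psi>) auto
next
  case (Imp a b)
  then obtain a' b' where \<psi>: "\<psi> = Imp a' b'"
    by (cases \<psi>) auto
  have "sat M a t1 = sat M a' t2"
    by (rule Imp.IH(1)) (use Imp.prems \<psi> in auto)
  moreover have "sat M b t1 = sat M b' t2"
    by (rule Imp.IH(2)) (use Imp.prems \<psi> in auto)
  ultimately show ?case
    using \<psi> by simp
next
  case (K a)
  then obtain b where "\<psi> = K b" "alpha_fm e1 e2 a b"
    by (cases \<psi>) auto
  with K.prems show ?case
    using kint_alpha_fm[OF assms] by simp
next
  case (All x a)
  then obtain y b where \<psi>: "\<psi> = All y b"
    by (cases \<psi>) auto
  have "sat M a (t1(x := d)) = sat M b (t2(y := d))" if "d \<in> univ M" for d
  proof (rule All.IH)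
    show "alpha_fm (x # e1) (y # e2) a b"
      using All.prems(1) \<psi> by simp
    show "is_assign M (t1(x := d))" "is_assign M (t2(y := d))"
      using All.prems(2,3) that by (simp_all add: is_assign_upd)
    show "(t1(x := d)) u = (t2(y := d)) v" if "alpha_var (x # e1) (y # e2) u v" for u v
      using that All.prems(4) unfolding alpha_var_Cons by auto
  qed
  then show ?case
    using \<psi> by simp
qed

lemma is_structure_M_of: "is_structure (M_of S)"
proof -
  have "kint (M_of S) a s = kint (M_of S) b s" if "alphabetic_variant a b" for a b s
  proof -
    have "alpha_fm [] [] (assigned a s) (assigned b s)"
      unfolding assigned_def using that
      by (intro alpha_fm_substs) (auto simp: alphabetic_variant_def alpha_tm_closed capture_free_closed)
    have "sat M (assigned a s) t = sat M (assigned b s) t" if "is_structure M" "is_assign M t" for M t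
      by (rule sat_alpha_fm[OF that(1) \<open>alpha_fm [] [] (assigned a s) (assigned b s)\<close> that(2) that(2)]) simp
    then show ?thesis
      by (simp add: entails_def)
  qed
  moreover have "kint (M_of S) a s = kint (M_of S) a s'" if "\<forall>x\<in>FV a. s x = s' x" for a s s'
    using that assigned_cong[of a s s'] by simp
  ultimately show ?thesis
    unfolding is_structure_def by (simp add: assigned_subst_Var)
qed

section \<open>The formula \<open>\<langle>t1, t2\<rangle> \<in> W t3\<close>\<close>

lemma memW_eq:
  fixes WF t1 t2 t3
  defines "N \<equiv> Suc (Max ({0} \<union> vars WF \<union> FVt t1 \<union> FVt t2 \<union> FVt t3))"
  shows "memW WF t1 t2 t3 = Exq N (Exq (N + 1) (Exq (N + 2) (And (Eq (Var N) t1)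
      (And (Eq (Var (N + 1)) t2) (And (Eq (Var (N + 2)) t3)
        (substs (Var(0 := Var N, 1 := Var (N + 1), 2 := Var (N + 2))) WF))))))"
    and "z \<in> vars WF \<union> FVt t1 \<union> FVt t2 \<union> FVt t3 \<Longrightarrow> z < N"
proof -
  show "memW WF t1 t2 t3 = Exq N (Exq (N + 1) (Exq (N + 2) (And (Eq (Var N) t1)
      (And (Eq (Var (N + 1)) t2) (And (Eq (Var (N + 2)) t3)
        (substs (Var(0 := Var N, 1 := Var (N + 1), 2 := Var (N + 2))) WF))))))"
    by (simp add: memW_def Let_def N_def)
  show "z \<in> vars WF \<union> FVt t1 \<union> FVt t2 \<union> FVt t3 \<Longrightarrow> z < N"
    using Max_ge[of "{0} \<union> vars WF \<union> FVt t1 \<union> FVt t2 \<union> FVt t3" z]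
    by (auto simp: N_def less_Suc_eq_le)
qed

lemma sat_memW:
  assumes "kfree WF" and FV_WF: "FV WF \<subseteq> {0, 1, 2}"
  shows "sat M (memW WF t1 t2 t3) s \<longleftrightarrow>
    evt M s t1 \<in> univ M \<and> evt M s t2 \<in> univ M \<and> evt M s t3 \<in> univ M \<and>
    sat M WF (s(0 := evt M s t1, 1 := evt M s t2, 2 := evt M s t3))"
proof -
  define N where "N = Suc (Max ({0} \<union> vars WF \<union> FVt t1 \<union> FVt t2 \<union> FVt t3))"
  note fresh = memW_eq(2)[of _ WF t1 t2 t3, folded N_def]
  define \<rho> where "\<rho> = Var(0 := Var N, 1 := Var (N + 1), 2 := Var (N + 2))"
  have "N \<notin> vars WF" "N + 1 \<notin> vars WF" "N + 2 \<notin> vars WF"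
    using fresh[of N] fresh[of "N + 1"] fresh[of "N + 2"] by auto
  then have "capture_free \<rho> WF"
    by (auto simp: capture_free_def \<rho>_def)
  moreover have "(\<lambda>y. evt M s' (\<rho> y)) = s'(0 := s' N, 1 := s' (N + 1), 2 := s' (N + 2))" for s'
    by (simp add: \<rho>_def fun_eq_iff)
  ultimately have "sat M (substs \<rho> WF) s' = sat M WF (s'(0 := s' N, 1 := s' (N + 1), 2 := s' (N + 2)))" for s'
    using sat_substs_kfree[OF assms(1)] by metis
  moreover have "sat M WF (s(N := a, N + 1 := b, N + 2 := c, 0 := a, 1 := b, 2 := c))
      = sat M WF (s(0 := a, 1 := b, 2 := c))" for a b c
    using FV_WF by (intro sat_cong_kfree[OF assms(1)]) auto
  moreover have "N \<notin> FVt t" "N + 1 \<notin> FVt t" "N + 2 \<notin> FVt t" if "t \<in> {t1, t2, t3}" for t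
    using that fresh by fastforce+
  ultimately show ?thesis
    unfolding memW_eq(1)[of WF t1 t2 t3, folded N_def] \<rho>_def[symmetric] by auto
qed

lemma FV_memW:
  assumes "FV WF \<subseteq> {0, 1, 2}"
  shows "FV (memW WF t1 t2 t3) \<subseteq> FVt t1 \<union> FVt t2 \<union> FVt t3"
proof -
  define N where "N = Suc (Max ({0} \<union> vars WF \<union> FVt t1 \<union> FVt t2 \<union> FVt t3))"
  define \<rho> where "\<rho> = Var(0 := Var N, 1 := Var (N + 1), 2 := Var (N + 2))"
  have "FVt (\<rho> y) \<subseteq> {N, N + 1, N + 2}" if "y \<in> FV WF" for y
    using that assms by (auto simp: \<rho>_def)
  then have "FV (substs \<rho> WF) \<subseteq> {N, N + 1, N + 2}"
    using FV_substs[of \<rho> WF] by blast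
  then show ?thesis
    unfolding memW_eq(1)[of WF t1 t2 t3, folded N_def] \<rho>_def[symmetric] by (auto simp: Exq_def And_def)
qed

section \<open>Models of PA and Sigma_1 formulas\<close>

fun num_val :: "str \<Rightarrow> nat \<Rightarrow> nat" where
  "num_val M 0 = zer M"
| "num_val M (Suc k) = suc M (num_val M k)"

lemma evt_num: "evt M s (num k) = num_val M k"
  by (induction k) auto

locale PA_model =
  fixes M :: str
  assumes is_structure: "is_structure M"
    and sat_PA: "\<And>a s. a \<in> PA \<Longrightarrow> is_assign M s \<Longrightarrow> sat M a s"
begin

lemma univ_closed [simp]:
  "zer M \<in> univ M"
  "d \<in> univ M \<Longrightarrow> suc M d \<in> univ M"
  "d \<in> univ M \<Longrightarrow> e \<in> univ M \<Longrightarrow> pls M d e \<in> univ M"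
  "d \<in> univ M \<Longrightarrow> e \<in> univ M \<Longrightarrow> tms M d e \<in> univ M"
  using is_structure by (simp_all add: is_structure_def)

lemma num_val_in_univ [simp]: "num_val M k \<in> univ M"
  by (induction k) auto

lemma sat_PA_sentence: "a \<in> PA \<Longrightarrow> sat M a (\<lambda>_. zer M)"
  using univ_closed(1) by (intro sat_PA) (simp_all add: is_assign_def)

lemma suc_neq_zer: "d \<in> univ M \<Longrightarrow> suc M d \<noteq> zer M"
  using sat_PA_sentence[of "All 0 (Neg (Eq (Sc (Var 0)) Zero))"] by (simp add: PA_def)

lemma suc_inject: "d \<in> univ M \<Longrightarrow> e \<in> univ M \<Longrightarrow> suc M d = suc M e \<Longrightarrow> d = e"
  using sat_PA_sentence[of "All 0 (All 1 (Imp (Eq (Sc (Var 0)) (Sc (Var 1))) (Eq (Var 0) (Var 1))))"]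
  by (simp add: PA_def)

lemma pls_zer: "d \<in> univ M \<Longrightarrow> pls M d (zer M) = d"
  using sat_PA_sentence[of "All 0 (Eq (Pl (Var 0) Zero) (Var 0))"] by (simp add: PA_def)

lemma pls_suc: "d \<in> univ M \<Longrightarrow> e \<in> univ M \<Longrightarrow> pls M d (suc M e) = suc M (pls M d e)"
  using sat_PA_sentence[of "All 0 (All 1 (Eq (Pl (Var 0) (Sc (Var 1))) (Sc (Pl (Var 0) (Var 1)))))"]
  by (simp add: PA_def)

lemma tms_zer: "d \<in> univ M \<Longrightarrow> tms M d (zer M) = zer M"
  using sat_PA_sentence[of "All 0 (Eq (Ml (Var 0) Zero) Zero)"] by (simp add: PA_def)

lemma tms_suc: "d \<in> univ M \<Longrightarrow> e \<in> univ M \<Longrightarrow> tms M d (suc M e) = pls M (tms M d e) d"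
  using sat_PA_sentence[of "All 0 (All 1 (Eq (Ml (Var 0) (Sc (Var 1))) (Pl (Ml (Var 0) (Var 1)) (Var 0))))"]
  by (simp add: PA_def)

lemma zer_or_suc: "d \<in> univ M \<Longrightarrow> d \<noteq> zer M \<Longrightarrow> \<exists>e\<in>univ M. d = suc M e"
proof -
  assume d: "d \<in> univ M" "d \<noteq> zer M"
  define a where "a = Imp (Neg (Eq (Var 0) Zero)) (Exq 1 (Eq (Var 0) (Sc (Var 1))))"
  define I where "I = Imp (subst 0 Zero a) (Imp (All 0 (Imp a (subst 0 (Sc (Var 0)) a))) (All 0 a))"
  have "uclose I \<in> PA"
    unfolding PA_def I_def by blast
  moreover have "FV I = {}"
    unfolding I_def a_def by (auto simp: subst_def Exq_def)
  ultimately have "sat M I (\<lambda>_. zer M)"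
    using sat_PA_sentence unfolding uclose_def by simp
  then have "\<forall>d\<in>univ M. d \<noteq> zer M \<longrightarrow> (\<exists>e\<in>univ M. d = suc M e)"
    unfolding I_def a_def by (simp add: subst_def Exq_def suc_neq_zer; blast)
  then show ?thesis
    using d by blast
qed

lemma num_val_add: "num_val M (i + j) = pls M (num_val M i) (num_val M j)"
  by (induction j) (simp_all add: pls_zer pls_suc)

lemma num_val_mult: "num_val M (i * j) = tms M (num_val M i) (num_val M j)"
proof (induction j)
  case (Suc j)
  have "num_val M (i * Suc j) = pls M (num_val M (i * j)) (num_val M i)"
    using num_val_add[of "i * j" i] by (simp add: add.commute)
  then show ?case
    using Suc by (simp add: tms_suc)
qed (simp add: tms_zer)

lemma num_val_inject: "num_val M i = num_val M j \<Longrightarrow> i = j"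
proof (induction i arbitrary: j)
  case 0
  then show ?case
    using suc_neq_zer[OF num_val_in_univ] by (cases j) (auto dest: sym)
next
  case (Suc i)
  then show ?case
    using suc_neq_zer[OF num_val_in_univ, of i] suc_inject[OF num_val_in_univ num_val_in_univ, of i]
    by (cases j) auto
qed

lemma pls_eq_num_val:
  assumes "d \<in> univ M"
  shows "e \<in> univ M \<Longrightarrow> pls M d e = num_val M j \<Longrightarrow> \<exists>i\<le>j. d = num_val M i"
proof (induction j arbitrary: e)
  case (0 e)
  show ?case
  proof (cases "e = zer M")
    case False
    then obtain e' where e': "e' \<in> univ M" "e = suc M e'"
      using zer_or_suc "0.prems"(1) by blast
    then have "suc M (pls M d e') = zer M"
      using "0.prems"(2) pls_suc[OF assms e'(1)] by simp
    with suc_neq_zer[of "pls M d e'"] assms e'(1) show ?thesis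
      by simp
  qed (use "0.prems" pls_zer[OF assms] in simp)
next
  case (Suc j e)
  show ?case
  proof (cases "e = zer M")
    case False
    then obtain e' where e': "e' \<in> univ M" "e = suc M e'"
      using zer_or_suc Suc.prems(1) by blast
    then have "suc M (pls M d e') = suc M (num_val M j)"
      using Suc.prems(2) pls_suc[OF assms e'(1)] by simp
    then have "pls M d e' = num_val M j"
      using suc_inject assms e'(1) by simp
    then obtain i where "i \<le> j" "d = num_val M i"
      using Suc.IH e'(1) by blast
    then show ?thesis
      by (intro exI[of _ i]) simp
  qed (use Suc.prems pls_zer[OF assms] in \<open>intro exI[of _ "Suc j"], simp\<close>)
qed

text \<open>The left-hand side is \<open>d < k\<close> as it occurs in bounded quantifiers: below a standard
  numeral, every element is standard.\<close>
lemma less_num_val_iff: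
  assumes "d \<in> univ M"
  shows "(\<exists>e\<in>univ M. pls M d (suc M e) = num_val M k) \<longleftrightarrow> (\<exists>i<k. d = num_val M i)"
proof
  assume "\<exists>e\<in>univ M. pls M d (suc M e) = num_val M k"
  then obtain e where e: "e \<in> univ M" and "suc M (pls M d e) = num_val M k"
    using assms pls_suc by auto
  moreover from this obtain k' where "k = Suc k'"
    using assms suc_neq_zer by (cases k) auto
  ultimately have "pls M d e = num_val M k'"
    using assms suc_inject by simp
  with \<open>k = Suc k'\<close> show "\<exists>i<k. d = num_val M i"
    using pls_eq_num_val[OF assms e] by (auto simp: less_Suc_eq_le)
next
  assume "\<exists>i<k. d = num_val M i"
  then obtain i where "i < k" "d = num_val M i"
    by blast
  then have "pls M d (suc M (num_val M (k - Suc i))) = num_val M k"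
    using num_val_add[of i "Suc (k - Suc i)"] by simp
  then show "\<exists>e\<in>univ M. pls M d (suc M e) = num_val M k"
    by (intro bexI[OF _ num_val_in_univ])
qed

lemma evt_standard:
  "(\<And>x. x \<in> FVt u \<Longrightarrow> t x = num_val M (s x)) \<Longrightarrow> evt M t u = num_val M (evt Nstd s u)"
  by (induction u) (auto simp: num_val_add num_val_mult)

lemma delta0_absolute:
  "delta0 \<phi> \<Longrightarrow> (\<And>x. x \<in> FV \<phi> \<Longrightarrow> t x = num_val M (s x)) \<Longrightarrow> sat M \<phi> t = sat Nstd \<phi> s"
proof (induction arbitrary: t s rule: delta0.induct)
  case (1 u v)
  then show ?case
    using evt_standard[of u t s] evt_standard[of v t s] num_val_inject by auto
next
  case (2 a)
  then show ?case
    by simp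
next
  case (3 a b)
  have "sat M a t = sat Nstd a s" "sat M b t = sat Nstd b s"
    by (rule "3.IH"; use "3.prems" in simp)+
  then show ?case
    by simp
next
  case (4 a y u z)
  define k where "k = evt Nstd s u"
  have "evt M t u = num_val M k"
    unfolding k_def using "4.prems" "4.hyps" by (intro evt_standard) (auto simp: Exq_def)
  then have "sat M (All y (Imp (Exq z (Eq (Pl (Var y) (Sc (Var z))) u)) a)) t
      \<longleftrightarrow> (\<forall>i<k. sat M a (t(y := num_val M i)))"
    using "4.hyps" less_num_val_iff by auto
  also have "\<dots> \<longleftrightarrow> (\<forall>i<k. sat Nstd a (s(y := i)))"
  proof -
    have "sat M a (t(y := num_val M i)) = sat Nstd a (s(y := i))" for i
      by (rule "4.IH") (use "4.prems" in \<open>auto simp: Exq_def\<close>)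
    then show ?thesis
      by simp
  qed
  also have "\<dots> \<longleftrightarrow> sat Nstd (All y (Imp (Exq z (Eq (Pl (Var y) (Sc (Var z))) u)) a)) s"
  proof -
    have "(\<exists>e. d + Suc e = k) \<longleftrightarrow> d < k" for d
      by (metis add_Suc_right less_add_Suc1 less_iff_Suc_add)
    with "4.hyps" show ?thesis
      by (simp add: k_def)
  qed
  finally show ?case .
qed

lemma sigma1_upward:
  "sigma1 \<phi> \<Longrightarrow> sat Nstd \<phi> s \<Longrightarrow> (\<And>x. x \<in> FV \<phi> \<Longrightarrow> t x = num_val M (s x)) \<Longrightarrow> sat M \<phi> t"
proof (induction arbitrary: t s rule: sigma1.induct)
  case (1 a)
  then show ?case
    using delta0_absolute by blast
next
  case (2 a y)
  then obtain d where "sat Nstd a (s(y := d))"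
    by auto
  then have "sat M a (t(y := num_val M d))"
    by (rule "2.IH") (use "2.prems" in \<open>auto simp: Exq_def\<close>)
  then show ?case
    by (auto intro: bexI[of _ "num_val M d"])
qed

end

lemma entails_mem: "a \<in> S \<Longrightarrow> entails S a"
  by (auto simp: entails_def models_def)

lemma entails_mp: "entails S (Imp a b) \<Longrightarrow> entails S a \<Longrightarrow> entails S b"
  by (auto simp: entails_def)

lemma models_Un [simp]: "models M (A \<union> B) \<longleftrightarrow> models M A \<and> models M B"
  by (auto simp: models_def)

lemma sat_M_of_K_sentence: "FV a = {} \<Longrightarrow> sat (M_of S) (K a) s \<longleftrightarrow> entails S a"
  by (simp add: assigned_sentence)

lemma M_of_models_E1: "AV \<subseteq> S \<Longrightarrow> models (M_of S) E1"
  unfolding models_def E1_def AV_def by (force intro!: sat_uclose entails_mem)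

lemma M_of_models_E2: "models (M_of S) E2"
  unfolding models_def E2_def by (force intro!: sat_uclose intro: entails_mp)

lemma M_of_models_E4:
  assumes "\<And>\<phi>. FV \<phi> = {} \<Longrightarrow> entails S \<phi> \<Longrightarrow> entails S (K \<phi>)"
  shows "models (M_of S) E4"
  unfolding models_def E4_def using assms by (force intro!: sat_uclose)

lemma M_of_models_AV: "models (M_of S) AV"
proof (unfold models_def AV_def, safe)
  fix a s0 s
  assume "valid a"
  have "sat (M_of S) (assigned a s0) s = sat (M_of S) a (\<lambda>y. evt (M_of S) s (num (s0 y)))"
    unfolding assigned_def by (rule sat_M_of_substs) (simp_all add: capture_free_closed)
  with \<open>valid a\<close> is_structure_M_of show "sat (M_of S) (assigned a s0) s"
    by (simp add: valid_def entails_def models_def)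
qed

lemma sat_M_of_subst:
  assumes "capture_free (Var(x := t)) a" and "succ_tm t"
  shows "sat (M_of S) (subst x t a) s = sat (M_of S) a (s(x := evt (M_of S) s t))"
proof -
  have "s(x := evt (M_of S) s t) = (\<lambda>y. evt (M_of S) s ((Var(x := t)) y))"
    by (simp add: fun_eq_iff)
  then show ?thesis
    unfolding subst_def using assms by (simp only:) (rule sat_M_of_substs, simp_all)
qed

lemma M_of_sat_induction:
  "sat (M_of S) (Imp (subst x Zero a) (Imp (All x (Imp a (subst x (Sc (Var x)) a))) (All x a))) s"
proof -
  have "capture_free (Var(x := Zero)) a" "capture_free (Var(x := Sc (Var x))) a"
    by (auto simp: capture_free_def)
  then have base: "sat (M_of S) (subst x Zero a) s' = sat (M_of S) a (s'(x := 0))"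
    and step: "sat (M_of S) (subst x (Sc (Var x)) a) s' = sat (M_of S) a (s'(x := Suc (s' x)))" for s'
    by (simp_all add: sat_M_of_subst)
  have ind: "sat (M_of S) a (s(x := d))"
    if "sat (M_of S) a (s(x := 0))" and "\<forall>d. sat (M_of S) a (s(x := d)) \<longrightarrow> sat (M_of S) a (s(x := Suc d))"
    for d
    using that by (induction d) auto
  show ?thesis
    by (simp add: base step) (use ind in blast)
qed

lemma M_of_models_PA: "models (M_of S) PA"
  unfolding models_def PA_def by (auto intro!: sat_uclose M_of_sat_induction)

lemma defines_WD:
  assumes "defines_W WF"
  shows "kfree WF" "FV WF \<subseteq> {0, 1, 2}" "sigma1 WF"
    and "sat Nstd WF s \<longleftrightarrow> prod_encode (s 0, s 1) \<in> W (s 2)"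
  using assms sigma1_kfree by (auto simp: defines_W_def)

lemma sat_M_of_memW:
  assumes "defines_W WF"
  shows "sat (M_of S) (memW WF (Var 0) (num g) (num n)) (s(0 := d)) \<longleftrightarrow> prod_encode (d, g) \<in> W n"
proof -
  have "sat (M_of S) (memW WF (Var 0) (num g) (num n)) (s(0 := d))
      \<longleftrightarrow> sat (M_of S) WF (s(0 := d, 1 := g, 2 := n))"
    by (simp add: sat_memW[OF defines_WD(1,2)[OF assms]])
  also have "\<dots> \<longleftrightarrow> sat Nstd WF (s(0 := d, 1 := g, 2 := n))"
    by (rule sat_M_of_kfree[OF defines_WD(1)[OF assms]])
  finally show ?thesis
    using defines_WD(4)[OF assms] by simp
qed

lemma M_of_models_Ax3:
  assumes "defines_W WF"
    and W_n: "W n = {prod_encode (m, gn a) | m a. FV a \<subseteq> {xv} \<and> entails S (subst xv (num m) a)}"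
  shows "models (M_of S) (Ax3 WF n)"
proof (unfold models_def Ax3_def, safe)
  fix a s
  assume a: "FV a \<subseteq> {xv}"
  have "entails S (assigned a (s(0 := d))) \<longleftrightarrow> prod_encode (d, gn a) \<in> W n" for d
    using a by (auto simp: W_n assigned_upd_eq_subst dest: gn_inj)
  then show "sat (M_of S) (All xv (Iff (K a) (memW WF (Var xv) (num (gn a)) (num n)))) s"
    by (simp add: sat_M_of_memW[OF assms(1)])
qed

lemma entails_K_sentence:
  assumes "defines_W WF"
    and W_n: "W n = {prod_encode (m, gn a) | m a. FV a \<subseteq> {xv} \<and> entails S (subst xv (num m) a)}"
    and "PA \<union> Ax3 WF n \<subseteq> S"
    and "FV \<phi> = {}" and "entails S \<phi>"
  shows "entails S (K \<phi>)"
  unfolding entails_def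
proof (intro allI impI)
  fix M t
  assume M: "is_structure M" "models M S" and t: "is_assign M t"
  interpret PA_model M
    using M assms(3) by unfold_locales (auto simp: models_def)
  let ?t0 = "t(0 := zer M)"
  have "prod_encode (0, gn \<phi>) \<in> W n"
    unfolding W_n using assms(4,5) subst_sentence[OF assms(4)] by fastforce
  then have "sat Nstd WF ((\<lambda>_. 0)(1 := gn \<phi>, 2 := n))"
    using defines_WD(4)[OF assms(1)] by simp
  then have "sat M WF (?t0(0 := zer M, 1 := num_val M (gn \<phi>), 2 := num_val M n))"
    using defines_WD(2)[OF assms(1)] by (intro sigma1_upward[OF defines_WD(3)[OF assms(1)]]) auto
  then have "sat M (memW WF (Var 0) (num (gn \<phi>)) (num n)) ?t0"
    by (simp add: sat_memW[OF defines_WD(1,2)[OF assms(1)]] evt_num)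
  moreover have "All 0 (Iff (K \<phi>) (memW WF (Var 0) (num (gn \<phi>)) (num n))) \<in> S"
    using assms(3,4) unfolding Ax3_def by blast
  ultimately have "kint M \<phi> ?t0"
    using M(2) t unfolding models_def by fastforce
  then show "sat M (K \<phi>) t"
    using structure_kint_cong[OF M(1) t, of ?t0 \<phi>] t assms(4) by (simp add: is_assign_upd)
qed

definition Sigma_base :: "fm \<Rightarrow> nat \<Rightarrow> fm set" where
  "Sigma_base WF n = E1 \<union> E2 \<union> E4 \<union> PA \<union> Ax3 WF n \<union> AV"

lemma SigmaT_eq: "SigmaT WF n = {(K ^^ j) a | a j. a \<in> Sigma_base WF n}"
  by (simp add: SigmaT_def Sigma_base_def)

lemma Sigma_base_subset_SigmaT: "Sigma_base WF n \<subseteq> SigmaT WF n"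
  unfolding SigmaT_eq by (force intro: exI[of _ 0])

lemma FV_Sigma_base:
  assumes "FV WF \<subseteq> {0, 1, 2}" and "b \<in> Sigma_base WF n"
  shows "FV b = {}"
  using assms(2) unfolding Sigma_base_def
proof (elim UnE)
  assume "b \<in> Ax3 WF n"
  then obtain a where "b = All xv (Iff (K a) (memW WF (Var xv) (num (gn a)) (num n)))" "FV a \<subseteq> {xv}"
    unfolding Ax3_def by blast
  with FV_memW[OF assms(1), of "Var xv" "num (gn a)" "num n"] show ?thesis
    by auto
qed (auto simp: E1_def E2_def E4_def PA_def AV_def)

lemma M_of_models_K_iterates:
  assumes "\<And>b. b \<in> B \<Longrightarrow> FV b = {}" and "{(K ^^ j) b | b j. b \<in> B} \<subseteq> S"
    and "models (M_of S) B"
  shows "models (M_of S) {(K ^^ j) b | b j. b \<in> B}"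
  unfolding models_def
proof (safe)
  fix b j s
  assume "b \<in> B"
  show "sat (M_of S) ((K ^^ j) b) s"
  proof (cases j)
    case 0
    with \<open>b \<in> B\<close> assms(3) show ?thesis
      by (simp add: models_def)
  next
    case (Suc i)
    have "FV ((K ^^ i) b) = {}"
      using assms(1)[OF \<open>b \<in> B\<close>] by simp
    moreover have "(K ^^ i) b \<in> S"
      using assms(2) \<open>b \<in> B\<close> by blast
    ultimately have "sat (M_of S) (K ((K ^^ i) b)) s"
      by (simp only: sat_M_of_K_sentence entails_mem)
    then show ?thesis
      using Suc by simp
  qed
qed

theorem proposition19:
  fixes WF :: fm and n :: nat
  assumes "defines_W WF"
    and "W n = {prod_encode (m, gn a) | m a. FV a \<subseteq> {xv} \<and> entails (SigmaT WF n) (subst xv (num m) a)}"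
  shows "models (M_of (SigmaT WF n)) (SigmaT WF n)"
proof -
  let ?S = "SigmaT WF n"
  have base: "Sigma_base WF n \<subseteq> ?S"
    by (rule Sigma_base_subset_SigmaT)
  have "entails ?S (K \<phi>)" if "FV \<phi> = {}" "entails ?S \<phi>" for \<phi>
    using base that by (intro entails_K_sentence[OF assms]) (auto simp: Sigma_base_def)
  then have "models (M_of ?S) (Sigma_base WF n)"
    using base unfolding Sigma_base_def
    by (simp add: M_of_models_E1 M_of_models_E2 M_of_models_E4 M_of_models_PA
        M_of_models_Ax3[OF assms] M_of_models_AV)
  then show ?thesis
    unfolding SigmaT_eq[of WF n]
    using FV_Sigma_base[OF defines_WD(2)[OF assms(1)]]
    by (intro M_of_models_K_iterates) (auto simp: SigmaT_eq[symmetric])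
qed

end
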